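(* In the truncated Gale–Shapley algorithm described in the context, with a weight function $w$ respecting the preferences, for every $i\ge 2$ we have $w(L_i)\le(\Delta-1)\,w_i(B)$.
   Context: Instance: a simple bipartite graph $\mathcal{G}=(R\cup B,E)$ (red nodes $R$, blue nodes $B$) without isolated nodes and with maximum degree $\Delta$, each node having a linear preference order on its neighbours. Algorithm (distributed Gale–Shapley): each blue $b$ keeps $p(b)$ (current partner or $\bot$), initially $\bot$. Each red $r$ keeps a list $C(r)$, initially all neighbours in decreasing preference; $c(r)$ (candidate awaiting response, or $\bot$), initially $\bot$; $p(r)$ (partner or $\bot$), initially $\bot$. Each round consists of a blue turn then a red turn. Blue turn, for each $b$: let $P$ be the set of neighbours that sent `propose'; if $P=\emptyset$ do nothing. Otherwise let $Q=P\cup\{p(b)\}$ if $p(b)\ne\bot$, else $Q=P$; let $q$ be $b$'s most preferred node in $Q$; if $q\ne p(b)$, send `break' to $p(b)$ (if $p(b)\ne\bot$), send `accept' to $q$, and set $p(b)\gets q$; send `reject' to every $r\in P\setminus\{q\}$. Red turn, for each $r$: (1) if $c(r)\neq\bot$, receive the message from $c(r)$; if `accept' set $p(r)\gets c(r)$; if `reject' remove $c(r)$ from $C(r)$; then set $c(r)\gets\bot$. (2) If $p(r)\ne\bot$ and $p(r)$ sent `break', remove $p(r)$ from $C(r)$ and set $p(r)\gets\bot$. (3) If $p(r)=\bot$ and $C(r)$ is nonempty, set $c(r)$ to the first element of $C(r)$ and send `propose' to it. Notation: a subscript $i$ denotes the value at the end of round $i$. An edge $\{r,b\}$ is lost when $r$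 removes $b$ from $C(r)$; $L_i\subseteq E$ is the set of edges lost by the end of round $i$. Let $w:E\to\mathbb{Z}_{>0}$ be a weight function respecting preferences: whenever a node $v$ prefers $x$ over $y$, $w(\{v,x\})\ge w(\{v,y\})$; $w(F)=\sum_{e\in F}w(e)$. For $b\in B$, $w_i(b)=w(\{b,p_i(b)\})$ if $p_i(b)\ne\bot$ and $w_i(b)=0$ otherwise; $w_i(B)=\sum_{b\in B}w_i(b)$. *)

theory Defs
  imports Main
begin

(* Graph: vertex sets R (red), B (blue); edges E are 2-element sets {r,b}.
   Preferences: rank v x < rank v y  means  v prefers x over y
   (rank v is injective on the neighbourhood of v, i.e. a linear order). *)

definition nbrs :: "'v set set \<Rightarrow> 'v \<Rightarrow> 'v set" where
  "nbrs E v = {u. {v, u} \<in> E}"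

definition prefers :: "('v \<Rightarrow> 'v \<Rightarrow> nat) \<Rightarrow> 'v \<Rightarrow> 'v \<Rightarrow> 'v \<Rightarrow> bool" where
  "prefers rank v x y \<longleftrightarrow> rank v x < rank v y"

definition max_degree :: "'v set set \<Rightarrow> 'v set \<Rightarrow> nat" where
  "max_degree E V = Max ((\<lambda>v. card (nbrs E v)) ` V)"

(* State at the end of a round:  pB = p(b) for blue nodes,
   Cr = C(r), cr = c(r), pr = p(r) for red nodes; None = \<bottom>. *)
record 'v gs_state =
  pB :: "'v \<Rightarrow> 'v option"
  Cr :: "'v \<Rightarrow> 'v list"
  cr :: "'v \<Rightarrow> 'v option"
  pr :: "'v \<Rightarrow> 'v option"

definition best :: "('v \<Rightarrow> 'v \<Rightarrow> nat) \<Rightarrow> 'v \<Rightarrow> 'v set \<Rightarrow> 'v" where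
  "best rank v Q = (THE q. q \<in> Q \<and> (\<forall>x\<in>Q. \<not> prefers rank v x q))"

(* the proposals received by b in a blue turn: those sent in the preceding red turn *)
definition proposers :: "'v set \<Rightarrow> 'v gs_state \<Rightarrow> 'v \<Rightarrow> 'v set" where
  "proposers R s b = {r \<in> R. cr s r = Some b}"

definition choice :: "'v set \<Rightarrow> ('v \<Rightarrow> 'v \<Rightarrow> nat) \<Rightarrow> 'v gs_state \<Rightarrow> 'v \<Rightarrow> 'v" where
  "choice R rank s b = best rank b (proposers R s b \<union> set_option (pB s b))"

definition switches :: "'v set \<Rightarrow> ('v \<Rightarrow> 'v \<Rightarrow> nat) \<Rightarrow> 'v gs_state \<Rightarrow> 'v \<Rightarrow> bool" where
  "switches R rank s b \<longleftrightarrow> proposers R s b \<noteq> {} \<and> pB s b \<noteq> Some (choice R rank s b)"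

(* messages sent by blue b to red r in the blue turn (state s = end of previous round) *)
definition msg_accept :: "'v set \<Rightarrow> 'v set \<Rightarrow> ('v \<Rightarrow> 'v \<Rightarrow> nat) \<Rightarrow> 'v gs_state \<Rightarrow> 'v \<Rightarrow> 'v \<Rightarrow> bool" where
  "msg_accept R B rank s b r \<longleftrightarrow> b \<in> B \<and> switches R rank s b \<and> r = choice R rank s b"

definition msg_reject :: "'v set \<Rightarrow> 'v set \<Rightarrow> ('v \<Rightarrow> 'v \<Rightarrow> nat) \<Rightarrow> 'v gs_state \<Rightarrow> 'v \<Rightarrow> 'v \<Rightarrow> bool" where
  "msg_reject R B rank s b r \<longleftrightarrow> b \<in> B \<and> r \<in> proposers R s b \<and> r \<noteq> choice R rank s b"

definition msg_break :: "'v set \<Rightarrow> 'v set \<Rightarrow> ('v \<Rightarrow> 'v \<Rightarrow> nat) \<Rightarrow> 'v gs_state \<Rightarrow> 'v \<Rightarrow> 'v \<Rightarrow> bool" where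
  "msg_break R B rank s b r \<longleftrightarrow> b \<in> B \<and> switches R rank s b \<and> pB s b = Some r"

definition blue_partner :: "'v set \<Rightarrow> 'v set \<Rightarrow> ('v \<Rightarrow> 'v \<Rightarrow> nat) \<Rightarrow> 'v gs_state \<Rightarrow> 'v \<Rightarrow> 'v option" where
  "blue_partner R B rank s b =
     (if b \<in> B \<and> switches R rank s b then Some (choice R rank s b) else pB s b)"

definition red1 :: "'v set \<Rightarrow> 'v set \<Rightarrow> ('v \<Rightarrow> 'v \<Rightarrow> nat) \<Rightarrow> 'v gs_state \<Rightarrow> 'v
    \<Rightarrow> 'v option \<times> 'v list" where
  "red1 R B rank s r =
     (case cr s r of
        None \<Rightarrow> (pr s r, Cr s r)
      | Some b \<Rightarrow>
          (if msg_accept R B rank s b r then Some b else pr s r,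
           if msg_reject R B rank s b r then removeAll b (Cr s r) else Cr s r))"

definition red2 :: "'v set \<Rightarrow> 'v set \<Rightarrow> ('v \<Rightarrow> 'v \<Rightarrow> nat) \<Rightarrow> 'v gs_state \<Rightarrow> 'v
    \<Rightarrow> 'v option \<times> 'v list" where
  "red2 R B rank s r =
     (case red1 R B rank s r of
        (None, C1) \<Rightarrow> (None, C1)
      | (Some b', C1) \<Rightarrow>
          (if msg_break R B rank s b' r then (None, removeAll b' C1) else (Some b', C1)))"

definition red3 :: "'v set \<Rightarrow> 'v set \<Rightarrow> ('v \<Rightarrow> 'v \<Rightarrow> nat) \<Rightarrow> 'v gs_state \<Rightarrow> 'v \<Rightarrow> 'v option" where
  "red3 R B rank s r =
     (case red2 R B rank s r of (p2, C2) \<Rightarrow>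
        (if p2 = None \<and> C2 \<noteq> [] then Some (hd C2) else None))"

definition gs_round :: "'v set \<Rightarrow> 'v set \<Rightarrow> ('v \<Rightarrow> 'v \<Rightarrow> nat) \<Rightarrow> 'v gs_state \<Rightarrow> 'v gs_state" where
  "gs_round R B rank s =
     \<lparr> pB = (\<lambda>b. blue_partner R B rank s b),
       Cr = (\<lambda>r. if r \<in> R then snd (red2 R B rank s r) else Cr s r),
       cr = (\<lambda>r. if r \<in> R then red3 R B rank s r else cr s r),
       pr = (\<lambda>r. if r \<in> R then fst (red2 R B rank s r) else pr s r) \<rparr>"

(* initial state: C(r) = all neighbours in decreasing preference *)
definition gs_init :: "'v set set \<Rightarrow> 'v set \<Rightarrow> ('v \<Rightarrow> 'v \<Rightarrow> nat) \<Rightarrow> 'v gs_state" where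
  "gs_init E R rank =
     \<lparr> pB = (\<lambda>_. None),
       Cr = (\<lambda>r. if r \<in> R then sorted_key_list_of_set (rank r) (nbrs E r) else []),
       cr = (\<lambda>_. None),
       pr = (\<lambda>_. None) \<rparr>"

(* state at the end of round i (round 0 = initial state) *)
primrec gs_run :: "'v set set \<Rightarrow> 'v set \<Rightarrow> 'v set \<Rightarrow> ('v \<Rightarrow> 'v \<Rightarrow> nat) \<Rightarrow> nat \<Rightarrow> 'v gs_state" where
  "gs_run E R B rank 0 = gs_init E R rank"
| "gs_run E R B rank (Suc i) = gs_round R B rank (gs_run E R B rank i)"

primrec lost :: "'v set set \<Rightarrow> 'v set \<Rightarrow> 'v set \<Rightarrow> ('v \<Rightarrow> 'v \<Rightarrow> nat) \<Rightarrow> nat \<Rightarrow> 'v set set" where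
  "lost E R B rank 0 = {}"
| "lost E R B rank (Suc i) = lost E R B rank i \<union>
     {{r, b} | r b. r \<in> R \<and> b \<in> set (Cr (gs_run E R B rank i) r)
                  \<and> b \<notin> set (Cr (gs_run E R B rank (Suc i)) r)}"

definition blue_weight :: "'v set set \<Rightarrow> 'v set \<Rightarrow> 'v set \<Rightarrow> ('v \<Rightarrow> 'v \<Rightarrow> nat)
    \<Rightarrow> ('v set \<Rightarrow> nat) \<Rightarrow> nat \<Rightarrow> nat" where
  "blue_weight E R B rank w i =
     (\<Sum>b\<in>B. case pB (gs_run E R B rank i) b of None \<Rightarrow> 0 | Some r \<Rightarrow> w {b, r})"

end

theory Submission
  imports Defs
begin

text \<open>
  An edge \<open>{r, b}\<close> is lost only when \<open>b\<close> rejects \<open>r\<close> or breaks with it in favour of a red node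
  it prefers, so at that moment \<open>b\<close> holds a partner of weight at least \<open>w {r, b}\<close>; since a blue
  node only ever trades up, this stays true in every later round. Hence at the end of round \<open>i\<close>
  every lost edge at \<open>b\<close> weighs at most \<open>w\<^sub>i(b)\<close>, and there are at most \<open>\<Delta> - 1\<close> of them,
  because the edge to the current partner of \<open>b\<close> is not lost. Summing over the blue nodes gives
  the bound.
\<close>

lemma best_least:
  assumes "finite Q" "Q \<noteq> {}" "inj_on (rank v) Q"
  shows "best rank v Q \<in> Q \<and> (\<forall>x\<in>Q. rank v (best rank v Q) \<le> rank v x)"
proof -
  have "Min (rank v ` Q) \<in> rank v ` Q"
    using assms(1,2) by (intro Min_in) auto
  then obtain q where q: "q \<in> Q" "rank v q = Min (rank v ` Q)"
    by auto
  have q_least: "\<forall>x\<in>Q. rank v q \<le> rank v x"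
    using q assms(1) by simp
  have "best rank v Q = q"
    unfolding best_def
  proof (rule the_equality)
    show "q \<in> Q \<and> (\<forall>x\<in>Q. \<not> prefers rank v x q)"
      using q q_least by (auto simp: prefers_def not_less)
  next
    fix q' assume "q' \<in> Q \<and> (\<forall>x\<in>Q. \<not> prefers rank v x q')"
    then show "q' = q"
      using q q_least assms(3) by (meson antisym inj_onD not_less prefers_def)
  qed
  then show ?thesis
    using q q_least by simp
qed

lemma (in linorder) set_sorted_key_list_of_set_inj_on:
  assumes "inj_on f A" "finite A"
  shows "set (sorted_key_list_of_set f A) = A"
proof -
  interpret folding_insort_key "(\<le>)" "(<)" A f
    using assms(1) by unfold_locales
  show ?thesis
    using assms(2) by simp
qed

lemma nbrs_sym: "u \<in> nbrs E v \<longleftrightarrow> v \<in> nbrs E u"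
  by (auto simp: nbrs_def insert_commute)

locale gale_shapley =
  fixes R B :: "'v set" and E :: "'v set set" and rank :: "'v \<Rightarrow> 'v \<Rightarrow> nat"
    and w :: "'v set \<Rightarrow> nat"
  assumes finR: "finite R" and finB: "finite B" and disj: "R \<inter> B = {}"
    and bip: "E \<subseteq> {{r, b} | r b. r \<in> R \<and> b \<in> B}"
    and linpref: "\<forall>v\<in>R \<union> B. inj_on (rank v) (nbrs E v)"
    and wresp: "\<forall>v x y. x \<in> nbrs E v \<and> y \<in> nbrs E v \<and> prefers rank v x y
                  \<longrightarrow> w {v, y} \<le> w {v, x}"
begin

lemma nbrs_blue_subset:
  assumes "b \<in> B" shows "nbrs E b \<subseteq> R"
proof
  fix u assume "u \<in> nbrs E b"
  then obtain r b' where "{b, u} = {r, b'}" "r \<in> R" "b' \<in> B"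
    using bip by (auto simp: nbrs_def)
  then show "u \<in> R"
    using assms disj by (auto simp: doubleton_eq_iff)
qed

lemma nbrs_red_subset:
  assumes "r \<in> R" shows "nbrs E r \<subseteq> B"
proof
  fix u assume "u \<in> nbrs E r"
  then obtain r' b where "{r, u} = {r', b}" "r' \<in> R" "b \<in> B"
    using bip by (auto simp: nbrs_def)
  then show "u \<in> B"
    using assms disj by (auto simp: doubleton_eq_iff)
qed

lemma weight_rank_antimono:
  assumes "b \<in> B" "x \<in> nbrs E b" "y \<in> nbrs E b" "rank b x \<le> rank b y"
  shows "w {b, y} \<le> w {b, x}"
proof (cases "x = y")
  case False
  then have "rank b x \<noteq> rank b y"
    using linpref assms by (meson UnI2 inj_onD)
  then have "prefers rank b x y"
    using assms(4) by (simp add: prefers_def)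
  then show ?thesis
    using wresp assms by blast
qed simp

definition invariant :: "'v gs_state \<Rightarrow> bool" where
  "invariant s \<longleftrightarrow>
     (\<forall>r. r \<notin> R \<longrightarrow> Cr s r = [] \<and> cr s r = None \<and> pr s r = None) \<and>
     (\<forall>r\<in>R. set (Cr s r) \<subseteq> nbrs E r) \<and>
     (\<forall>r b. cr s r = Some b \<longrightarrow> b \<in> set (Cr s r) \<and> pr s r = None) \<and>
     (\<forall>b r. pB s b = Some r \<longrightarrow> b \<in> B \<and> r \<in> R \<and> b \<in> set (Cr s r) \<and> pr s r = Some b)"

lemma invariant_init: "invariant (gs_init E R rank)"
proof -
  have "set (sorted_key_list_of_set (rank r) (nbrs E r)) = nbrs E r" if "r \<in> R" for r
    using linpref that nbrs_red_subset[OF that] finB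
    by (intro set_sorted_key_list_of_set_inj_on) (auto intro: finite_subset)
  then show ?thesis
    by (auto simp: invariant_def gs_init_def)
qed

lemma offer_set_subset_nbrs:
  assumes "invariant s"
  shows "proposers R s b \<union> set_option (pB s b) \<subseteq> nbrs E b"
  using assms by (fastforce simp: invariant_def proposers_def nbrs_sym)

lemma choice_best:
  assumes I: "invariant s" and b: "b \<in> B" and P: "proposers R s b \<union> set_option (pB s b) \<noteq> {}"
  shows "choice R rank s b \<in> proposers R s b \<union> set_option (pB s b)"
    and "x \<in> proposers R s b \<union> set_option (pB s b) \<Longrightarrow> rank b (choice R rank s b) \<le> rank b x"
proof -
  let ?Q = "proposers R s b \<union> set_option (pB s b)"
  have "finite ?Q"
    using finR by (auto simp: proposers_def intro: finite_subset)
  moreover have "inj_on (rank b) ?Q"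
    using linpref b offer_set_subset_nbrs[OF I] by (meson UnI2 inj_on_subset)
  ultimately have "best rank b ?Q \<in> ?Q \<and> (\<forall>x\<in>?Q. rank b (best rank b ?Q) \<le> rank b x)"
    using P by (intro best_least)
  then show "choice R rank s b \<in> ?Q" "x \<in> ?Q \<Longrightarrow> rank b (choice R rank s b) \<le> rank b x"
    by (simp_all add: choice_def)
qed

lemma choice_weight_ge:
  assumes I: "invariant s" and b: "b \<in> B" and r: "r \<in> proposers R s b \<union> set_option (pB s b)"
  shows "w {b, r} \<le> w {b, choice R rank s b}"
proof (rule weight_rank_antimono[OF b])
  have ne: "proposers R s b \<union> set_option (pB s b) \<noteq> {}"
    using r by blast
  show "choice R rank s b \<in> nbrs E b"
    using choice_best(1)[OF I b ne] offer_set_subset_nbrs[OF I] by blast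
  show "r \<in> nbrs E b"
    using r offer_set_subset_nbrs[OF I] by blast
  show "rank b (choice R rank s b) \<le> rank b r"
    using choice_best(2)[OF I b ne r] .
qed

lemma pB_round_choice:
  "b \<in> B \<Longrightarrow> proposers R s b \<noteq> {} \<Longrightarrow> pB (gs_round R B rank s) b = Some (choice R rank s b)"
  by (auto simp: gs_round_def blue_partner_def switches_def)

lemma Cr_red1_subset: "set (snd (red1 R B rank s r)) \<subseteq> set (Cr s r)"
  by (cases "cr s r") (auto simp: red1_def)

lemma Cr_red2_subset: "set (snd (red2 R B rank s r)) \<subseteq> set (Cr s r)"
proof -
  obtain p C where pC: "red1 R B rank s r = (p, C)"
    by fastforce
  have "set (snd (red2 R B rank s r)) \<subseteq> set C"
    by (cases p) (auto simp: red2_def pC)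
  then show ?thesis
    using Cr_red1_subset[of s r] pC by auto
qed

lemma Cr_round_subset: "set (Cr (gs_round R B rank s) r) \<subseteq> set (Cr s r)"
  using Cr_red2_subset by (auto simp: gs_round_def)

lemma drop_from_Cr_cases:
  assumes "b \<in> set (Cr s r)" "b \<notin> set (snd (red2 R B rank s r))"
  shows "(cr s r = Some b \<and> msg_reject R B rank s b r) \<or> msg_break R B rank s b r"
proof -
  obtain p C where pC: "red1 R B rank s r = (p, C)"
    by fastforce
  have C: "b \<in> set C \<or> (cr s r = Some b \<and> msg_reject R B rank s b r)"
    using assms(1) pC by (cases "cr s r") (auto simp: red1_def split: if_splits)
  show ?thesis
  proof (cases p)
    case None
    then show ?thesis
      using C assms(2) by (simp add: red2_def pC)
  next
    case (Some b')
    then show ?thesis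
      using C assms(2) by (auto simp: red2_def pC split: if_splits)
  qed
qed

lemma partner_round:
  assumes I: "invariant s" and h: "pB (gs_round R B rank s) b = Some r"
  shows "b \<in> B \<and> r \<in> R \<and> b \<in> set (Cr (gs_round R B rank s) r)
           \<and> pr (gs_round R B rank s) r = Some b"
proof (cases "b \<in> B \<and> switches R rank s b")
  case True
  then have r: "r = choice R rank s b" and ne: "pB s b \<noteq> Some r"
    and P: "proposers R s b \<noteq> {}"
    using h by (auto simp: gs_round_def blue_partner_def switches_def)
  then have "r \<in> proposers R s b"
    using choice_best(1)[OF I] P True by auto
  then have rR: "r \<in> R" and cr: "cr s r = Some b"
    by (auto simp: proposers_def)
  then have "b \<in> set (Cr s r)"
    using I by (auto simp: invariant_def)
  moreover have "red2 R B rank s r = (Some b, Cr s r)"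
    using cr True r ne by (simp add: red2_def red1_def msg_accept_def msg_reject_def msg_break_def)
  ultimately show ?thesis
    using True rR by (simp add: gs_round_def)
next
  case False
  then have "pB s b = Some r"
    using h by (auto simp: gs_round_def blue_partner_def)
  then have bB: "b \<in> B" and rR: "r \<in> R" and bC: "b \<in> set (Cr s r)" and ps: "pr s r = Some b"
    using I by (auto simp: invariant_def)
  have "cr s r = None"
    using I ps by (cases "cr s r") (auto simp: invariant_def)
  then have "red2 R B rank s r = (Some b, Cr s r)"
    using False bB ps by (simp add: red2_def red1_def msg_break_def)
  then show ?thesis
    using bB rR bC by (simp add: gs_round_def)
qed

lemma invariant_round:
  assumes I: "invariant s"
  shows "invariant (gs_round R B rank s)"
proof -
  have "b \<in> set (Cr (gs_round R B rank s) r) \<and> pr (gs_round R B rank s) r = None"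
    if h: "cr (gs_round R B rank s) r = Some b" for r b
  proof (cases "r \<in> R")
    case False
    then show ?thesis
      using h I by (auto simp: invariant_def gs_round_def)
  next
    case True
    then have "red3 R B rank s r = Some b"
      using h by (simp add: gs_round_def)
    then show ?thesis
      using True by (auto simp: gs_round_def red3_def split: prod.splits if_splits)
  qed
  moreover have "\<forall>r. r \<notin> R \<longrightarrow> Cr (gs_round R B rank s) r = [] \<and> cr (gs_round R B rank s) r = None
      \<and> pr (gs_round R B rank s) r = None"
    using I by (simp add: invariant_def gs_round_def)
  moreover have "\<forall>r\<in>R. set (Cr (gs_round R B rank s) r) \<subseteq> nbrs E r"
    using I Cr_round_subset unfolding invariant_def by blast
  ultimately show ?thesis
    using partner_round[OF I] unfolding invariant_def by blast
qed

abbreviation run :: "nat \<Rightarrow> 'v gs_state" where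
  "run i \<equiv> gs_run E R B rank i"

lemma invariant_run: "invariant (run i)"
  by (induction i) (simp_all add: invariant_init invariant_round)

lemma Cr_run_antimono: "j \<le> i \<Longrightarrow> set (Cr (run i) r) \<subseteq> set (Cr (run j) r)"
proof (induction i rule: dec_induct)
  case (step k)
  then show ?case
    using Cr_round_subset[of "run k" r] by simp
qed simp

lemma partner_nbr: "pB (run i) b = Some r \<Longrightarrow> b \<in> B \<and> r \<in> nbrs E b \<and> b \<in> set (Cr (run i) r)"
  using invariant_run[of i] by (fastforce simp: invariant_def nbrs_sym)

lemma partner_weight_mono_round:
  assumes I: "invariant s" and h: "pB s b = Some r"
  shows "\<exists>r'. pB (gs_round R B rank s) b = Some r' \<and> w {b, r} \<le> w {b, r'}"
proof (cases "proposers R s b = {}")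
  case True
  then show ?thesis
    using h by (auto simp: gs_round_def blue_partner_def switches_def)
next
  case False
  have "b \<in> B"
    using I h by (auto simp: invariant_def)
  then show ?thesis
    using h choice_weight_ge[OF I] pB_round_choice[OF _ False] by auto
qed

lemma partner_weight_mono_run:
  "j \<le> i \<Longrightarrow> pB (run j) b = Some r \<Longrightarrow> \<exists>r'. pB (run i) b = Some r' \<and> w {b, r} \<le> w {b, r'}"
proof (induction i rule: dec_induct)
  case (step k)
  then obtain r' where r': "pB (run k) b = Some r'" "w {b, r} \<le> w {b, r'}"
    by auto
  obtain r'' where "pB (run (Suc k)) b = Some r''" "w {b, r'} \<le> w {b, r''}"
    using partner_weight_mono_round[OF invariant_run r'(1)] by auto
  then show ?case
    using r'(2) by auto
qed auto

lemma loss_round_dominated: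
  assumes I: "invariant s" and rR: "r \<in> R" and "b \<in> set (Cr s r)"
    and "b \<notin> set (Cr (gs_round R B rank s) r)"
  shows "\<exists>r'. pB (gs_round R B rank s) b = Some r' \<and> w {b, r} \<le> w {b, r'}"
proof -
  have "b \<notin> set (snd (red2 R B rank s r))"
    using assms(4) rR by (simp add: gs_round_def)
  then have bB: "b \<in> B" and P: "proposers R s b \<noteq> {}"
    and "r \<in> proposers R s b \<union> set_option (pB s b)"
    using drop_from_Cr_cases[OF assms(3)] by (auto simp: msg_reject_def msg_break_def switches_def)
  then show ?thesis
    using choice_weight_ge[OF I bB] pB_round_choice[OF bB P] by auto
qed

lemma lost_cases:
  "e \<in> lost E R B rank i \<Longrightarrow> \<exists>r b j. e = {r, b} \<and> r \<in> R \<and> j < i \<and>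
      b \<in> set (Cr (run j) r) \<and> b \<notin> set (Cr (run (Suc j)) r)"
  by (induction i) (auto intro: less_SucI)

lemma lost_edge_dominated:
  assumes "e \<in> lost E R B rank i"
  obtains r b r' where "e = {r, b}" "r \<in> R" "b \<in> B" "r \<in> nbrs E b"
    "pB (run i) b = Some r'" "r' \<noteq> r" "w e \<le> w {b, r'}"
proof -
  obtain r b j where e: "e = {r, b}" and rR: "r \<in> R" and ji: "j < i"
    and in_j: "b \<in> set (Cr (run j) r)" and out_j: "b \<notin> set (Cr (run (Suc j)) r)"
    using lost_cases[OF assms] by blast
  obtain r1 where r1: "pB (run (Suc j)) b = Some r1" "w {b, r} \<le> w {b, r1}"
    using loss_round_dominated[OF invariant_run rR in_j] out_j by auto
  obtain r' where r': "pB (run i) b = Some r'" "w {b, r1} \<le> w {b, r'}"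
    using partner_weight_mono_run[OF _ r1(1), of i] ji by auto
  have "b \<notin> set (Cr (run i) r)"
    using Cr_run_antimono[of "Suc j" i r] ji out_j by auto
  then have "r' \<noteq> r"
    using partner_nbr[OF r'(1)] by auto
  moreover have "r \<in> nbrs E b"
    using invariant_run[of j] rR in_j by (auto simp: invariant_def nbrs_sym)
  moreover have "b \<in> B"
    using partner_nbr[OF r'(1)] by blast
  ultimately show ?thesis
    using that e rR r1 r' by (simp add: insert_commute)
qed

definition lost_at :: "'v \<Rightarrow> nat \<Rightarrow> 'v set set" where
  "lost_at b i = {e \<in> lost E R B rank i. b \<in> e}"

definition partner_weight :: "nat \<Rightarrow> 'v \<Rightarrow> nat" where
  "partner_weight i b = (case pB (run i) b of None \<Rightarrow> 0 | Some r \<Rightarrow> w {b, r})"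

lemma lost_at_dominated:
  assumes "e \<in> lost_at b i" "b \<in> B"
  obtains r r' where "e = {r, b}" "r \<in> nbrs E b" "pB (run i) b = Some r'" "r' \<noteq> r"
    "w e \<le> w {b, r'}"
proof -
  obtain r b0 r' where e: "e = {r, b0}" "r \<in> R" "b0 \<in> B" "r \<in> nbrs E b0"
    "pB (run i) b0 = Some r'" "r' \<noteq> r" "w e \<le> w {b0, r'}"
    using assms(1) unfolding lost_at_def by (auto elim: lost_edge_dominated)
  have "b = b0"
    using assms e(1,2) disj unfolding lost_at_def by auto
  then show ?thesis
    using that e by blast
qed

lemma lost_eq_UN_lost_at: "lost E R B rank i = (\<Union>b\<in>B. lost_at b i)"
proof
  show "lost E R B rank i \<subseteq> (\<Union>b\<in>B. lost_at b i)"
    by (auto simp: lost_at_def elim: lost_edge_dominated)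
qed (auto simp: lost_at_def)

lemma lost_at_disjoint:
  assumes "b \<in> B" "b' \<in> B" "b \<noteq> b'"
  shows "lost_at b i \<inter> lost_at b' i = {}"
proof (rule ccontr)
  assume "lost_at b i \<inter> lost_at b' i \<noteq> {}"
  then obtain e where e: "e \<in> lost_at b i" "b' \<in> e"
    by (auto simp: lost_at_def)
  then obtain r where "e = {r, b}" "r \<in> nbrs E b"
    using assms(1) by (auto elim: lost_at_dominated)
  then show False
    using e(2) assms nbrs_blue_subset disj by auto
qed

lemma finite_lost_at:
  assumes "b \<in> B" shows "finite (lost_at b i)"
proof (rule finite_subset)
  show "lost_at b i \<subseteq> (\<lambda>r. {r, b}) ` nbrs E b"
  proof
    fix e assume "e \<in> lost_at b i"
    then obtain r where "e = {r, b}" "r \<in> nbrs E b"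
      using assms by (auto elim: lost_at_dominated)
    then show "e \<in> (\<lambda>r. {r, b}) ` nbrs E b"
      by blast
  qed
  show "finite ((\<lambda>r. {r, b}) ` nbrs E b)"
    using nbrs_blue_subset[OF assms] finR by (auto intro: finite_subset)
qed

lemma sum_lost_at_le:
  assumes bB: "b \<in> B"
  shows "(\<Sum>e\<in>lost_at b i. w e) \<le> (max_degree E (R \<union> B) - 1) * partner_weight i b"
proof (cases "lost_at b i = {}")
  case False
  then obtain e0 where "e0 \<in> lost_at b i"
    by blast
  then obtain r' where r': "pB (run i) b = Some r'"
    using bB by (rule lost_at_dominated)
  have lost_edge: "\<exists>r \<in> nbrs E b - {r'}. e = {r, b} \<and> w e \<le> w {b, r'}"
    if "e \<in> lost_at b i" for e
    using lost_at_dominated[OF that bB] r' by (metis DiffI option.inject singletonD)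
  have finN: "finite (nbrs E b)"
    using nbrs_blue_subset[OF bB] finR by (rule finite_subset)
  have "lost_at b i \<subseteq> (\<lambda>r. {r, b}) ` (nbrs E b - {r'})"
    using lost_edge by blast
  then have "card (lost_at b i) \<le> card ((\<lambda>r. {r, b}) ` (nbrs E b - {r'}))"
    using finN by (intro card_mono) auto
  also have "\<dots> \<le> card (nbrs E b - {r'})"
    using finN by (intro card_image_le) auto
  also have "\<dots> = card (nbrs E b) - 1"
    using partner_nbr[OF r'] finN by simp
  also have "\<dots> \<le> max_degree E (R \<union> B) - 1"
    using bB finR finB unfolding max_degree_def by (intro diff_le_mono Max_ge) auto
  finally have card_le: "card (lost_at b i) \<le> max_degree E (R \<union> B) - 1" .
  have "(\<Sum>e\<in>lost_at b i. w e) \<le> card (lost_at b i) * w {b, r'}"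
    using lost_edge sum_bounded_above[of "lost_at b i" w "w {b, r'}"] by fastforce
  also have "\<dots> \<le> (max_degree E (R \<union> B) - 1) * w {b, r'}"
    using card_le by (rule mult_right_mono) simp
  finally show ?thesis
    using r' by (simp add: partner_weight_def)
qed simp

theorem lost_weight_le:
  "(\<Sum>e\<in>lost E R B rank i. w e) \<le> (max_degree E (R \<union> B) - 1) * blue_weight E R B rank w i"
proof -
  have "(\<Sum>e\<in>lost E R B rank i. w e) = (\<Sum>b\<in>B. \<Sum>e\<in>lost_at b i. w e)"
    unfolding lost_eq_UN_lost_at
    using finB finite_lost_at lost_at_disjoint by (intro sum.UNION_disjoint) auto
  also have "\<dots> \<le> (\<Sum>b\<in>B. (max_degree E (R \<union> B) - 1) * partner_weight i b)"
    by (intro sum_mono sum_lost_at_le)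
  also have "\<dots> = (max_degree E (R \<union> B) - 1) * blue_weight E R B rank w i"
    by (simp add: blue_weight_def partner_weight_def sum_distrib_left)
  finally show ?thesis .
qed

end

theorem lemma5:
  fixes R B :: "'v set" and E :: "'v set set" and rank :: "'v \<Rightarrow> 'v \<Rightarrow> nat"
    and w :: "'v set \<Rightarrow> nat" and i :: nat
  assumes finR: "finite R" and finB: "finite B" and disj: "R \<inter> B = {}"
    and bip: "E \<subseteq> {{r, b} | r b. r \<in> R \<and> b \<in> B}"
    and no_isolated: "\<forall>v\<in>R \<union> B. \<exists>e\<in>E. v \<in> e"
    and linpref: "\<forall>v\<in>R \<union> B. inj_on (rank v) (nbrs E v)"
    and wpos: "\<forall>e\<in>E. 0 < w e"
    and wresp: "\<forall>v x y. x \<in> nbrs E v \<and> y \<in> nbrs E v \<and> prefers rank v x y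
                  \<longrightarrow> w {v, y} \<le> w {v, x}"
    and i2: "2 \<le> i"
  shows "(\<Sum>e\<in>lost E R B rank i. w e)
           \<le> (max_degree E (R \<union> B) - 1) * blue_weight E R B rank w i"
proof -
  interpret gale_shapley R B E rank w
    using finR finB disj bip linpref wresp by unfold_locales
  show ?thesis
    by (rule lost_weight_le)
qed

end
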